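(* Assume $\alpha=\beta=1$ and let $(U,V,\Lambda)$ be the similarity profile, with $\lambda^*:=\|\Lambda/U\|_{L^\infty}$. Then for every $\tau\ge0$ and all measurable $\rho,\zeta:\mathbb R\to(0,\infty)$ for which $\mathcal I_\Lambda(\rho,\zeta)$ is finite, setting $\mathbf u=(\rho U,\zeta V)$, $$\mathcal I_\Lambda(\rho,\zeta)-e^\tau\mathcal D_{\mathrm{react}}(\rho,\zeta)\le\mu_0e^{-\tau}\mathcal E_{\mathrm B}(\mathbf u|\mathbf U)+K_0e^{-\tau},$$ where $\mu_0=\frac{(\lambda^* )^2e^{\lambda^*/k}}{2k}$ and $K_0=\frac{e^{\lambda^*/k}}{k}\int_{\mathbb R}\frac{\alpha^2\Lambda^2}{U}\mathrm dy$.
   Context: Fix $d_1,d_2,k>0$, real stoichiometric coefficients $\alpha,\beta\ge1$ and $A_-,A_+>0$. The similarity profile is a triple $(U,V,\Lambda)$ with $U,V\in\mathrm C^2(\mathbb R)$ positive, bounded and bounded away from $0$, $\Lambda:\mathbb R\to\mathbb R$, satisfying $d_1U''+\tfrac y2U'+\alpha\Lambda=0$, $d_2V''+\tfrac y2V'-\beta\Lambda=0$, $U^\alpha=V^\beta$ on $\mathbb R$, and $U(\pm\infty)=A_\pm^\beta$, $V(\pm\infty)=A_\pm^\alpha$; $\mathbf U=(U,V)$. $\lambda_{\mathrm B}(z)=z\log z-z+1$; $\mathcal E_{\mathrm B}(\mathbf u|\mathbf U)=\int_{\mathbb R}\big(\lambda_{\mathrm B}(\rho)U+\lambda_{\mathrm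 B}(\zeta)V\big)\mathrm dy$ with $\rho=u/U$, $\zeta=v/V$. $\Gamma(a,b)=(a-b)(\log a-\log b)$ for $a,b>0$, $\Gamma(0,0)=0$, $\Gamma(0,c)=\Gamma(c,0)=\infty$ for $c>0$. Reactive dissipation $\mathcal D_{\mathrm{react}}(\rho,\zeta)=\int_{\mathbb R}kU^\alpha\,\Gamma(\rho^\alpha,\zeta^\beta)\,\mathrm dy$. Mixed term $\mathcal I_\Lambda(\rho,\zeta)=\int_{\mathbb R}\big((1-\rho)\alpha-(1-\zeta)\beta\big)\Lambda\,\mathrm dy$. $\|\cdot\|_{L^\infty}$ is the supremum of the absolute value. *)

theory Defs
  imports "HOL-Analysis.Analysis"
begin

definition C2_fun :: "(real \<Rightarrow> real) \<Rightarrow> bool" where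
  "C2_fun f \<longleftrightarrow> (\<forall>y. f differentiable at y) \<and> (\<forall>y. deriv f differentiable at y)
     \<and> continuous_on UNIV (deriv (deriv f))"

definition pos_bdd_away :: "(real \<Rightarrow> real) \<Rightarrow> bool" where
  "pos_bdd_away f \<longleftrightarrow> (\<exists>c>0. \<forall>y. c \<le> f y) \<and> (\<exists>C. \<forall>y. f y \<le> C)"

definition similarity_profile ::
  "real \<Rightarrow> real \<Rightarrow> real \<Rightarrow> real \<Rightarrow> real \<Rightarrow> real \<Rightarrow>
   (real \<Rightarrow> real) \<Rightarrow> (real \<Rightarrow> real) \<Rightarrow> (real \<Rightarrow> real) \<Rightarrow> bool" where
  "similarity_profile d1 d2 \<alpha> \<beta> Am Ap U V \<Lambda> \<longleftrightarrow>
     C2_fun U \<and> C2_fun V \<and> pos_bdd_away U \<and> pos_bdd_away V \<and>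
     (\<forall>y. d1 * deriv (deriv U) y + y / 2 * deriv U y + \<alpha> * \<Lambda> y = 0) \<and>
     (\<forall>y. d2 * deriv (deriv V) y + y / 2 * deriv V y - \<beta> * \<Lambda> y = 0) \<and>
     (\<forall>y. U y powr \<alpha> = V y powr \<beta>) \<and>
     (U \<longlongrightarrow> Am powr \<beta>) at_bot \<and> (U \<longlongrightarrow> Ap powr \<beta>) at_top \<and>
     (V \<longlongrightarrow> Am powr \<alpha>) at_bot \<and> (V \<longlongrightarrow> Ap powr \<alpha>) at_top"

definition lambdaB :: "real \<Rightarrow> real" where
  "lambdaB z = z * ln z - z + 1"

definition entropyB ::
  "(real \<Rightarrow> real) \<Rightarrow> (real \<Rightarrow> real) \<Rightarrow> (real \<Rightarrow> real) \<Rightarrow> (real \<Rightarrow> real) \<Rightarrow> ennreal" where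
  "entropyB u v U V = (\<integral>\<^sup>+ y. ennreal (lambdaB (u y / U y) * U y + lambdaB (v y / V y) * V y) \<partial>lebesgue)"

definition GammaF :: "real \<Rightarrow> real \<Rightarrow> ereal" where
  "GammaF a b = (if a > 0 \<and> b > 0 then ereal ((a - b) * (ln a - ln b))
                 else if a = 0 \<and> b = 0 then 0 else \<infinity>)"

definition D_react ::
  "real \<Rightarrow> real \<Rightarrow> real \<Rightarrow> (real \<Rightarrow> real) \<Rightarrow> (real \<Rightarrow> real) \<Rightarrow> (real \<Rightarrow> real) \<Rightarrow> ennreal" where
  "D_react k \<alpha> \<beta> U \<rho> \<zeta> =
     (\<integral>\<^sup>+ y. e2ennreal (ereal (k * U y powr \<alpha>) * GammaF (\<rho> y powr \<alpha>) (\<zeta> y powr \<beta>)) \<partial>lebesgue)"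

definition I_mixed_integrand ::
  "real \<Rightarrow> real \<Rightarrow> (real \<Rightarrow> real) \<Rightarrow> (real \<Rightarrow> real) \<Rightarrow> (real \<Rightarrow> real) \<Rightarrow> real \<Rightarrow> real" where
  "I_mixed_integrand \<alpha> \<beta> \<Lambda> \<rho> \<zeta> y = ((1 - \<rho> y) * \<alpha> - (1 - \<zeta> y) * \<beta>) * \<Lambda> y"

definition I_mixed ::
  "real \<Rightarrow> real \<Rightarrow> (real \<Rightarrow> real) \<Rightarrow> (real \<Rightarrow> real) \<Rightarrow> (real \<Rightarrow> real) \<Rightarrow> real" where
  "I_mixed \<alpha> \<beta> \<Lambda> \<rho> \<zeta> = (\<integral> y. I_mixed_integrand \<alpha> \<beta> \<Lambda> \<rho> \<zeta> y \<partial>lebesgue)"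

definition sup_norm :: "(real \<Rightarrow> real) \<Rightarrow> real" where
  "sup_norm f = (SUP y. \<bar>f y\<bar>)"

end

theory Submission
  imports Defs
begin

text \<open>For \<open>\<alpha> = \<beta> = 1\<close> the profile satisfies \<open>V = U\<close>, and the two profile equations
  give \<open>\<Lambda> = (d\<^sub>2 - d\<^sub>1) U''/2\<close> with \<open>U'\<close> a Gaussian, so \<open>\<Lambda>/U\<close> is bounded.
  Pointwise, \<open>(\<zeta> - \<rho>)\<Lambda>\<close> is split by Young's inequality: one part is absorbed by
  \<open>e\<^sup>\<tau> k U \<Gamma>(\<rho>,\<zeta>)\<close>, since \<open>\<Gamma>(\<rho>,\<zeta>) \<ge> (\<rho> - \<zeta>)\<^sup>2 / max \<rho> \<zeta>\<close>; the other is
  \<open>e\<^sup>-\<^sup>\<tau> max \<rho> \<zeta> \<Lambda>\<^sup>2 / (4 k U)\<close>, and \<open>max \<rho> \<zeta> / 4 \<le> (\<lambda>\<^sub>B(\<rho>) + \<lambda>\<^sub>B(\<zeta>))/2 + 1\<close> bounds it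
  by the entropy density plus \<open>\<Lambda>\<^sup>2/U\<close>.\<close>

lemma one_minus_inverse_le_ln:
  fixes x :: real
  assumes "0 < x"
  shows "1 - 1 / x \<le> ln x"
  using ln_le_minus_one[of "1 / x"] assms by (simp add: ln_div)

lemma lambdaB_nonneg:
  assumes "0 < x"
  shows "0 \<le> lambdaB x"
proof -
  have "x * (1 - 1 / x) \<le> x * ln x"
    using one_minus_inverse_le_ln[OF assms] assms by (intro mult_left_mono) auto
  moreover have "x * (1 - 1 / x) = x - 1"
    using assms by (simp add: field_simps)
  ultimately show ?thesis
    by (simp add: lambdaB_def)
qed

text \<open>Compare with the tangent line of \<open>lambdaB\<close> at \<open>sqrt e\<close>, using \<open>sqrt e \<le> 3\<close>.\<close>
lemma quarter_le_lambdaB: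
  assumes m: "0 < m"
  shows "m / 4 \<le> lambdaB m / 2 + 1"
proof -
  define c where "c = exp (1 / 2 :: real)"
  have "c \<le> exp 1" unfolding c_def by simp
  then have c3: "c \<le> 3"
    using exp_le by linarith
  have c0: "0 < c" unfolding c_def by simp
  have "1 - c / m \<le> ln (m / c)"
    using one_minus_inverse_le_ln[of "m / c"] m c0 by simp
  also have "ln (m / c) = ln m - 1 / 2"
    using m c0 by (simp add: ln_div c_def)
  finally have "m * (3 / 2 - c / m) \<le> m * ln m"
    using m by (intro mult_left_mono) auto
  moreover have "m * (3 / 2 - c / m) = 3 / 2 * m - c"
    using m by (simp add: field_simps)
  ultimately have "3 / 2 * m - c \<le> m * ln m"
    by simp
  with c3 show ?thesis
    unfolding lambdaB_def by (simp add: field_simps)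
qed

lemma max_quarter_le_lambdaB:
  assumes "0 < r" "0 < z"
  shows "max r z / 4 \<le> (lambdaB r + lambdaB z) / 2 + 1"
proof -
  have "r / 4 \<le> lambdaB r / 2 + 1" "z / 4 \<le> lambdaB z / 2 + 1" "0 \<le> lambdaB r" "0 \<le> lambdaB z"
    using quarter_le_lambdaB lambdaB_nonneg assms by auto
  then show ?thesis
    by (cases "r \<le> z") (simp_all add: max_def field_simps)
qed

lemma diff_mult_ln_diff_nonneg:
  fixes r z :: real
  assumes "0 < r" "0 < z"
  shows "0 \<le> (r - z) * (ln r - ln z)"
  using assms by (cases "z \<le> r") (auto intro: mult_nonneg_nonneg mult_nonpos_nonpos)

text \<open>The logarithmic mean \<open>(r - z) / (ln r - ln z)\<close> is at most \<open>max r z\<close>.\<close>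
lemma sq_diff_div_max_le_diff_mult_ln_diff:
  fixes r z :: real
  assumes r: "0 < r" and z: "0 < z"
  shows "(r - z)\<^sup>2 / max r z \<le> (r - z) * (ln r - ln z)"
proof -
  have key: "(a - b)\<^sup>2 / a \<le> (a - b) * (ln a - ln b)" if "0 < b" "b \<le> a" for a b :: real
  proof -
    have "1 - b / a \<le> ln (a / b)"
      using one_minus_inverse_le_ln[of "a / b"] that by simp
    then have "(a - b) / a \<le> ln a - ln b"
      using that by (simp add: ln_div diff_divide_distrib)
    then have "(a - b) * ((a - b) / a) \<le> (a - b) * (ln a - ln b)"
      using that by (intro mult_left_mono) auto
    then show ?thesis
      by (simp add: power2_eq_square)
  qed
  show ?thesis
  proof (cases "z \<le> r")
    case True
    then show ?thesis using key[OF z] by (simp add: max_def)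
  next
    case False
    then show ?thesis using key[OF r, of z]
      by (simp add: max_def power2_commute algebra_simps)
  qed
qed

lemma mult_le_young:
  fixes A X Y :: real
  assumes "0 < A"
  shows "X * Y \<le> A * X\<^sup>2 + Y\<^sup>2 / (4 * A)"
proof -
  have "0 \<le> A * (X - Y / (2 * A))\<^sup>2"
    using assms by simp
  also have "\<dots> = A * X\<^sup>2 + Y\<^sup>2 / (4 * A) - X * Y"
    using assms by (simp add: power2_eq_square field_simps)
  finally show ?thesis by simp
qed

lemma mult_le_Gamma_young:
  fixes u r z l c :: real
  assumes u: "0 < u" and r: "0 < r" and z: "0 < z" and c: "0 < c"
  shows "(z - r) * l \<le> c * u * ((r - z) * (ln r - ln z)) + l\<^sup>2 / u * (max r z / (4 * c))"
proof -
  define m where "m = max r z"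
  have m: "0 < m" using r by (simp add: m_def)
  have "(z - r) * l \<le> \<bar>r - z\<bar> * \<bar>l\<bar>"
    by (metis abs_ge_self abs_minus_commute abs_mult)
  also have "\<dots> \<le> c * u / m * \<bar>r - z\<bar>\<^sup>2 + \<bar>l\<bar>\<^sup>2 / (4 * (c * u / m))"
    using u c m by (intro mult_le_young) simp
  also have "c * u / m * \<bar>r - z\<bar>\<^sup>2 \<le> c * u * ((r - z) * (ln r - ln z))"
    using mult_left_mono[OF sq_diff_div_max_le_diff_mult_ln_diff[OF r z], of "c * u"] c u
    unfolding m_def by simp
  also have "\<bar>l\<bar>\<^sup>2 / (4 * (c * u / m)) = l\<^sup>2 / u * (m / (4 * c))"
    using u c m by (simp add: field_simps)
  finally show ?thesis unfolding m_def by simp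
qed

lemma sq_div_le_of_abs_div_le:
  fixes l u L :: real
  assumes "0 < u" "\<bar>l\<bar> / u \<le> L"
  shows "l\<^sup>2 / u \<le> L\<^sup>2 * u"
proof -
  have "(\<bar>l\<bar> / u)\<^sup>2 \<le> L\<^sup>2"
    using assms by (intro power_mono) auto
  then have "(\<bar>l\<bar> / u)\<^sup>2 * u \<le> L\<^sup>2 * u"
    using assms by (intro mult_right_mono) auto
  then show ?thesis
    using assms by (simp add: power_divide power2_eq_square)
qed

text \<open>The factor \<open>E \<ge> 1\<close> is slack; the theorem uses \<open>E = exp (\<lambda>\<^sup>* / k)\<close>.\<close>
lemma mixed_integrand_le:
  fixes u r z l L t k E :: real
  assumes u: "0 < u" and r: "0 < r" and z: "0 < z" and t: "0 < t" and k: "0 < k"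
    and l: "\<bar>l\<bar> / u \<le> L" and E: "1 \<le> E"
  shows "(z - r) * l \<le> t * (k * u * ((r - z) * (ln r - ln z)))
          + L\<^sup>2 * E / (2 * k) * inverse t * (lambdaB r * u + lambdaB z * u)
          + E / k * inverse t * (l\<^sup>2 / u)"
proof -
  define S where "S = lambdaB r + lambdaB z"
  define q where "q = l\<^sup>2 / u"
  have S: "0 \<le> S" using lambdaB_nonneg r z by (simp add: S_def)
  have q: "0 \<le> q" using u by (simp add: q_def)
  have tk: "0 < t * k" using t k by simp
  have "(z - r) * l \<le> t * k * u * ((r - z) * (ln r - ln z)) + q * (max r z / (4 * (t * k)))"
    unfolding q_def by (rule mult_le_Gamma_young[OF u r z tk])
  also have "q * (max r z / (4 * (t * k))) \<le> q * ((S / 2 + 1) / (t * k))"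
    using max_quarter_le_lambdaB[OF r z] q tk unfolding S_def
    by (intro mult_left_mono) (auto simp: field_simps)
  also have "\<dots> = q * S / (2 * t * k) + q / (t * k)"
    using t k by (simp add: field_simps)
  also have "q * S / (2 * t * k) \<le> L\<^sup>2 * E / (2 * k) * inverse t * (S * u)"
  proof -
    have "q * S \<le> L\<^sup>2 * u * S"
      using sq_div_le_of_abs_div_le[OF u l] S unfolding q_def by (intro mult_right_mono)
    also have "\<dots> \<le> E * (L\<^sup>2 * u * S)"
      using mult_right_mono[OF E, of "L\<^sup>2 * u * S"] S u by simp
    finally have "q * S / (2 * t * k) \<le> E * (L\<^sup>2 * u * S) / (2 * t * k)"
      using t k by (intro divide_right_mono) auto
    then show ?thesis
      by (simp add: field_simps)
  qed
  also have "q / (t * k) \<le> E / k * inverse t * q"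
    using E q t k by (simp add: field_simps mult_le_cancel_right1)
  finally show ?thesis
    unfolding S_def q_def by (simp add: mult.assoc distrib_right)
qed

lemma abs_le_exp_sq_div:
  fixes y s :: real
  assumes s: "0 < s"
  shows "\<bar>y\<bar> \<le> (s + 1) * exp (y\<^sup>2 / (2 * s))"
proof -
  have "\<bar>y\<bar> \<le> (s + y\<^sup>2 / s) / 2"
    using mult_le_young[of "s / 4" 2 "\<bar>y\<bar>"] s by simp
  also have "\<dots> \<le> (s + y\<^sup>2 / s) / 2 + (s / 2 + 1 + y\<^sup>2 / 2)"
    using s by (intro add_increasing2) auto
  also have "\<dots> = (s + 1) * (1 + y\<^sup>2 / (2 * s))"
    using s by (simp add: field_simps)
  also have "\<dots> \<le> (s + 1) * exp (y\<^sup>2 / (2 * s))"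
    using s by (intro mult_left_mono exp_ge_add_one_self) auto
  finally show ?thesis .
qed

lemma gaussian_ode_solution:
  fixes g g' :: "real \<Rightarrow> real"
  assumes s: "0 < s" and g: "\<And>y. (g has_real_derivative g' y) (at y)"
    and ode: "\<And>y. s * g' y + y * g y = 0"
  shows "g y = g 0 * exp (- y\<^sup>2 / (2 * s))"
proof -
  define W where "W y = g y * exp (y\<^sup>2 / (2 * s))" for y
  have "(W has_real_derivative exp (x\<^sup>2 / (2 * s)) / s * (s * g' x + x * g x)) (at x)" for x
    unfolding W_def using s
    by (auto intro!: derivative_eq_intros g simp: power2_eq_square field_simps)
  then have "(W has_real_derivative 0) (at x)" for x
    using ode by simp
  then have "W y = W 0"
    using DERIV_isconst_all by blast
  then show ?thesis
    by (simp add: W_def exp_minus field_simps)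
qed

lemma gaussian_ode_derivative_bound:
  fixes g g' :: "real \<Rightarrow> real"
  assumes s: "0 < s" and g: "\<And>y. (g has_real_derivative g' y) (at y)"
    and ode: "\<And>y. s * g' y + y * g y = 0"
  shows "\<bar>g' y\<bar> \<le> \<bar>g 0\<bar> * (s + 1) / s"
proof -
  define e where "e = exp (y\<^sup>2 / (2 * s))"
  have e: "0 < e" by (simp add: e_def)
  have "g' y = - y * g y / s"
    using ode[of y] s by (simp add: field_simps)
  also have "g y = g 0 / e"
    using gaussian_ode_solution[OF s g ode, of y] by (simp add: e_def exp_minus field_simps)
  finally have "\<bar>g' y\<bar> = \<bar>g 0\<bar> * (\<bar>y\<bar> / e) / s"
    using s e by (simp add: abs_mult)
  also have "\<dots> \<le> \<bar>g 0\<bar> * (s + 1) / s"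
    using abs_le_exp_sq_div[OF s, of y] s e unfolding e_def[symmetric]
    by (intro divide_right_mono mult_left_mono) (auto simp: field_simps)
  finally show ?thesis .
qed

lemma pos_bdd_away_pos: "pos_bdd_away f \<Longrightarrow> 0 < f y"
  unfolding pos_bdd_away_def by (meson less_le_trans)

lemma abs_le_sup_norm:
  assumes "bdd_above (range (\<lambda>y. \<bar>f y\<bar>))"
  shows "\<bar>f y\<bar> \<le> sup_norm f"
  unfolding sup_norm_def using assms by (rule cSUP_upper[OF UNIV_I])

lemma continuous_on_borel_measurable_lebesgue:
  fixes f :: "real \<Rightarrow> real"
  assumes "continuous_on UNIV f"
  shows "f \<in> borel_measurable lebesgue"
  using continuous_imp_measurable_on_sets_lebesgue[OF assms] by simp

context
  fixes d1 d2 Am Ap :: real and U V \<Lambda> :: "real \<Rightarrow> real"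
  assumes profile: "similarity_profile d1 d2 1 1 Am Ap U V \<Lambda>"
begin

lemma similarity_profile_V_eq_U: "V = U"
proof
  fix y
  have "\<bar>U y\<bar> = \<bar>V y\<bar>" "pos_bdd_away U" "pos_bdd_away V"
    using profile unfolding similarity_profile_def by auto
  then show "V y = U y"
    using pos_bdd_away_pos[of U y] pos_bdd_away_pos[of V y] by simp
qed

lemma similarity_profile_U_pos: "0 < U y"
  using profile pos_bdd_away_pos unfolding similarity_profile_def by blast

lemma similarity_profile_equations:
  "d1 * deriv (deriv U) y + y / 2 * deriv U y + \<Lambda> y = 0"
  "d2 * deriv (deriv U) y + y / 2 * deriv U y - \<Lambda> y = 0"
  using profile similarity_profile_V_eq_U unfolding similarity_profile_def by auto

lemma similarity_profile_Lambda_eq: "\<Lambda> y = (d2 - d1) / 2 * deriv (deriv U) y"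
  using similarity_profile_equations[of y] by (simp add: field_simps)

lemma similarity_profile_deriv_ode: "(d1 + d2) * deriv (deriv U) y + y * deriv U y = 0"
  using similarity_profile_equations[of y] by (simp add: field_simps)

lemma similarity_profile_has_derivatives:
  "(U has_real_derivative deriv U y) (at y)"
  "(deriv U has_real_derivative deriv (deriv U) y) (at y)"
  using profile unfolding similarity_profile_def C2_fun_def
  by (simp_all add: DERIV_deriv_iff_real_differentiable)

lemma similarity_profile_measurable:
  "U \<in> borel_measurable lebesgue" "\<Lambda> \<in> borel_measurable lebesgue"
proof -
  have "continuous_on UNIV U"
    using similarity_profile_has_derivatives
    by (meson DERIV_continuous continuous_at_imp_continuous_on)
  then show "U \<in> borel_measurable lebesgue"
    by (rule continuous_on_borel_measurable_lebesgue)
  have "continuous_on UNIV (deriv (deriv U))"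
    using profile unfolding similarity_profile_def C2_fun_def by simp
  then have "continuous_on UNIV (\<lambda>y. (d2 - d1) / 2 * deriv (deriv U) y)"
    by (intro continuous_intros)
  then show "\<Lambda> \<in> borel_measurable lebesgue"
    unfolding similarity_profile_Lambda_eq[abs_def, symmetric]
    by (rule continuous_on_borel_measurable_lebesgue)
qed

lemma similarity_profile_Lambda_div_bdd:
  assumes "0 < d1" "0 < d2"
  shows "bdd_above (range (\<lambda>y. \<bar>\<Lambda> y / U y\<bar>))"
proof -
  define s where "s = d1 + d2"
  have s: "0 < s" using assms by (simp add: s_def)
  define B where "B = \<bar>deriv U 0\<bar> * (s + 1) / s"
  obtain c where c: "0 < c" "\<And>y. c \<le> U y"
    using profile unfolding similarity_profile_def pos_bdd_away_def by auto
  have "\<bar>\<Lambda> y / U y\<bar> \<le> \<bar>d2 - d1\<bar> / 2 * B / c" for y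
  proof -
    have "\<bar>deriv (deriv U) y\<bar> \<le> B"
      unfolding B_def using s similarity_profile_has_derivatives(2) similarity_profile_deriv_ode
      by (intro gaussian_ode_derivative_bound) (auto simp: s_def)
    then have "\<bar>d2 - d1\<bar> / 2 * \<bar>deriv (deriv U) y\<bar> \<le> \<bar>d2 - d1\<bar> / 2 * B"
      by (intro mult_left_mono) auto
    then have "\<bar>\<Lambda> y\<bar> \<le> \<bar>d2 - d1\<bar> / 2 * B"
      unfolding similarity_profile_Lambda_eq by (simp add: abs_mult)
    moreover have "0 < U y" using c by (metis less_le_trans)
    ultimately have "\<bar>\<Lambda> y\<bar> / U y \<le> \<bar>d2 - d1\<bar> / 2 * B / c"
      using c by (intro frac_le) auto
    with \<open>0 < U y\<close> show ?thesis
      by simp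
  qed
  then show ?thesis
    by (intro bdd_aboveI2)
qed

lemma similarity_profile_Lambda_div_le_sup_norm:
  assumes "0 < d1" "0 < d2"
  shows "\<bar>\<Lambda> y\<bar> / U y \<le> sup_norm (\<lambda>y. \<Lambda> y / U y)"
  using abs_le_sup_norm[OF similarity_profile_Lambda_div_bdd[OF assms], of y] similarity_profile_U_pos[of y]
  by (simp add: abs_of_pos)

end

lemma D_react_unit_coefficients:
  assumes "\<And>y. 0 < U y" "\<And>y. 0 < \<rho> y" "\<And>y. 0 < \<zeta> y"
  shows "D_react k 1 1 U \<rho> \<zeta> =
    (\<integral>\<^sup>+ y. ennreal (k * U y * ((\<rho> y - \<zeta> y) * (ln (\<rho> y) - ln (\<zeta> y)))) \<partial>lebesgue)"
  unfolding D_react_def using assms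
  by (intro nn_integral_cong) (simp add: GammaF_def less_imp_le)

lemma entropyB_eq_nn_integral:
  assumes "\<And>y. 0 < U y" "\<And>y. 0 < V y"
  shows "entropyB (\<lambda>y. \<rho> y * U y) (\<lambda>y. \<zeta> y * V y) U V =
    (\<integral>\<^sup>+ y. ennreal (lambdaB (\<rho> y) * U y + lambdaB (\<zeta> y) * V y) \<partial>lebesgue)"
  unfolding entropyB_def using assms
  by (intro nn_integral_cong) (simp add: less_imp_neq[symmetric])

lemma integral_le_nn_integral:
  fixes f g :: "'a \<Rightarrow> real"
  assumes f: "integrable M f" and le: "\<And>x. f x \<le> g x"
  shows "ereal (integral\<^sup>L M f) \<le> enn2ereal (\<integral>\<^sup>+ x. ennreal (g x) \<partial>M)"
proof -
  have pos: "integrable M (\<lambda>x. max 0 (f x))"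
    using f by auto
  have "integral\<^sup>L M f \<le> integral\<^sup>L M (\<lambda>x. max 0 (f x))"
    using f pos by (intro integral_mono) auto
  then have "ereal (integral\<^sup>L M f) \<le> enn2ereal (ennreal (integral\<^sup>L M (\<lambda>x. max 0 (f x))))"
    by (simp add: integral_nonneg_AE)
  also have "ennreal (integral\<^sup>L M (\<lambda>x. max 0 (f x))) = (\<integral>\<^sup>+ x. ennreal (max 0 (f x)) \<partial>M)"
    using pos by (intro nn_integral_eq_integral[symmetric]) auto
  also have "\<dots> \<le> (\<integral>\<^sup>+ x. ennreal (g x) \<partial>M)"
    using le by (intro nn_integral_mono) (auto simp: max_def ennreal_neg intro: ennreal_leI)
  finally show ?thesis
    by (simp add: less_eq_ennreal.rep_eq)
qed

lemma nn_integral_linear_combination: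
  fixes g h q :: "'a \<Rightarrow> real"
  assumes meas: "g \<in> borel_measurable M" "h \<in> borel_measurable M" "q \<in> borel_measurable M"
    and nonneg: "\<And>x. 0 \<le> g x" "\<And>x. 0 \<le> h x" "\<And>x. 0 \<le> q x"
    and coeffs: "0 \<le> a" "0 \<le> b" "0 \<le> c"
  shows "enn2ereal (\<integral>\<^sup>+ x. ennreal (a * g x + b * h x + c * q x) \<partial>M) =
    ereal a * enn2ereal (\<integral>\<^sup>+ x. ennreal (g x) \<partial>M) + ereal b * enn2ereal (\<integral>\<^sup>+ x. ennreal (h x) \<partial>M)
      + ereal c * enn2ereal (\<integral>\<^sup>+ x. ennreal (q x) \<partial>M)"
proof -
  have "(\<integral>\<^sup>+ x. ennreal (a * g x + b * h x + c * q x) \<partial>M) =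
      (\<integral>\<^sup>+ x. ennreal a * ennreal (g x) + ennreal b * ennreal (h x) + ennreal c * ennreal (q x) \<partial>M)"
    using nonneg coeffs by (intro nn_integral_cong) (simp add: ennreal_plus ennreal_mult)
  also have "\<dots> = ennreal a * (\<integral>\<^sup>+ x. ennreal (g x) \<partial>M) + ennreal b * (\<integral>\<^sup>+ x. ennreal (h x) \<partial>M)
      + ennreal c * (\<integral>\<^sup>+ x. ennreal (q x) \<partial>M)"
    using meas by (simp add: nn_integral_add nn_integral_cmult)
  finally show ?thesis
    using coeffs by (simp add: plus_ennreal.rep_eq times_ennreal.rep_eq)
qed

lemma integral_le_nn_integral_combination:
  fixes f g h q :: "'a \<Rightarrow> real"
  assumes "integrable M f"
    and "g \<in> borel_measurable M" "h \<in> borel_measurable M" "q \<in> borel_measurable M"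
    and "\<And>x. 0 \<le> g x" "\<And>x. 0 \<le> h x" "\<And>x. 0 \<le> q x"
    and "0 \<le> a" "0 \<le> b" "0 \<le> c"
    and "\<And>x. f x \<le> a * g x + b * h x + c * q x"
  shows "ereal (integral\<^sup>L M f) \<le> ereal a * enn2ereal (\<integral>\<^sup>+ x. ennreal (g x) \<partial>M)
    + (ereal b * enn2ereal (\<integral>\<^sup>+ x. ennreal (h x) \<partial>M) + ereal c * enn2ereal (\<integral>\<^sup>+ x. ennreal (q x) \<partial>M))"
proof -
  have "ereal (integral\<^sup>L M f) \<le> enn2ereal (\<integral>\<^sup>+ x. ennreal (a * g x + b * h x + c * q x) \<partial>M)"
    using assms by (intro integral_le_nn_integral)
  also have "\<dots> = ereal a * enn2ereal (\<integral>\<^sup>+ x. ennreal (g x) \<partial>M)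
      + ereal b * enn2ereal (\<integral>\<^sup>+ x. ennreal (h x) \<partial>M) + ereal c * enn2ereal (\<integral>\<^sup>+ x. ennreal (q x) \<partial>M)"
    using assms by (intro nn_integral_linear_combination)
  finally show ?thesis
    by (simp add: add.assoc)
qed

lemma ereal_times_commute_right: "ereal (a * b) * X = ereal a * X * ereal b"
  by (metis mult.assoc mult.commute times_ereal.simps(1))

lemma ereal_diff_le_of_le_add:
  fixes D R :: ereal
  assumes "ereal x \<le> ereal t * D + R" "0 \<le> D" "0 < t"
  shows "ereal x - ereal t * D \<le> R"
  using assms by (cases D; cases R) (auto simp: ereal_minus_le_iff)

theorem mainTheorem11:
  fixes d1 d2 k Am Ap \<tau> :: real and U V \<Lambda> \<rho> \<zeta> :: "real \<Rightarrow> real"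
  assumes "d1 > 0" "d2 > 0" "k > 0" "Am > 0" "Ap > 0"
    and prof: "similarity_profile d1 d2 1 1 Am Ap U V \<Lambda>"
    and "\<tau> \<ge> 0"
    and "\<rho> \<in> borel_measurable lebesgue" "\<zeta> \<in> borel_measurable lebesgue"
    and "\<forall>y. \<rho> y > 0" "\<forall>y. \<zeta> y > 0"
    and "integrable lebesgue (I_mixed_integrand 1 1 \<Lambda> \<rho> \<zeta>)"
  shows "let lamS = sup_norm (\<lambda>y. \<Lambda> y / U y);
             \<mu>0 = lamS\<^sup>2 * exp (lamS / k) / (2 * k);
             K0 = ereal (exp (lamS / k) / k) *
                  enn2ereal (\<integral>\<^sup>+ y. ennreal ((1::real)\<^sup>2 * (\<Lambda> y)\<^sup>2 / U y) \<partial>lebesgue)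
         in ereal (I_mixed 1 1 \<Lambda> \<rho> \<zeta>) - ereal (exp \<tau>) * enn2ereal (D_react k 1 1 U \<rho> \<zeta>)
            \<le> ereal (\<mu>0 * exp (- \<tau>)) *
                enn2ereal (entropyB (\<lambda>y. \<rho> y * U y) (\<lambda>y. \<zeta> y * V y) U V)
              + K0 * ereal (exp (- \<tau>))"
proof -
  note [measurable] = assms(8,9) similarity_profile_measurable[OF prof]
  have k: "0 < k" and \<rho>: "\<And>y. 0 < \<rho> y" and \<zeta>: "\<And>y. 0 < \<zeta> y" using assms by auto
  have U: "\<And>y. 0 < U y" by (rule similarity_profile_U_pos[OF prof])
  define L where "L = sup_norm (\<lambda>y. \<Lambda> y / U y)"
  have L: "\<And>y. \<bar>\<Lambda> y\<bar> / U y \<le> L"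
    unfolding L_def by (rule similarity_profile_Lambda_div_le_sup_norm[OF prof assms(1,2)])
  then have "0 \<le> L" using U[of 0] by (meson abs_ge_zero divide_nonneg_pos order_trans)
  then have E: "1 \<le> exp (L / k)" using k by simp
  have "ereal (I_mixed 1 1 \<Lambda> \<rho> \<zeta>) \<le> ereal (exp \<tau>)
      * enn2ereal (\<integral>\<^sup>+ y. ennreal (k * U y * ((\<rho> y - \<zeta> y) * (ln (\<rho> y) - ln (\<zeta> y)))) \<partial>lebesgue)
    + (ereal (L\<^sup>2 * exp (L / k) / (2 * k) * exp (- \<tau>))
      * enn2ereal (\<integral>\<^sup>+ y. ennreal (lambdaB (\<rho> y) * U y + lambdaB (\<zeta> y) * U y) \<partial>lebesgue)
    + ereal (exp (L / k) / k * exp (- \<tau>)) * enn2ereal (\<integral>\<^sup>+ y. ennreal ((\<Lambda> y)\<^sup>2 / U y) \<partial>lebesgue))"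
    unfolding I_mixed_def
  proof (rule integral_le_nn_integral_combination[OF assms(12)])
    fix y
    show "I_mixed_integrand 1 1 \<Lambda> \<rho> \<zeta> y \<le> exp \<tau> * (k * U y * ((\<rho> y - \<zeta> y) * (ln (\<rho> y) - ln (\<zeta> y))))
      + L\<^sup>2 * exp (L / k) / (2 * k) * exp (- \<tau>) * (lambdaB (\<rho> y) * U y + lambdaB (\<zeta> y) * U y)
      + exp (L / k) / k * exp (- \<tau>) * ((\<Lambda> y)\<^sup>2 / U y)"
      using mixed_integrand_le[OF U \<rho> \<zeta> exp_gt_zero k L E]
      unfolding exp_minus by (simp add: I_mixed_integrand_def)
    show "0 \<le> k * U y * ((\<rho> y - \<zeta> y) * (ln (\<rho> y) - ln (\<zeta> y)))"
      "0 \<le> lambdaB (\<rho> y) * U y + lambdaB (\<zeta> y) * U y" "0 \<le> (\<Lambda> y)\<^sup>2 / U y"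
      using diff_mult_ln_diff_nonneg[OF \<rho> \<zeta>] lambdaB_nonneg[OF \<rho>] lambdaB_nonneg[OF \<zeta>] U[of y] k
      by simp_all
  qed (use k in \<open>simp_all add: lambdaB_def\<close>)
  then show ?thesis
    unfolding Let_def L_def[symmetric] similarity_profile_V_eq_U[OF prof] power_one mult_1
      D_react_unit_coefficients[OF U \<rho> \<zeta>] entropyB_eq_nn_integral[OF U U]
      ereal_times_commute_right[symmetric]
    by (rule ereal_diff_le_of_le_add) (simp_all only: enn2ereal_nonneg exp_gt_zero)
qed

end
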